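(* Let $P(z)=a_1z+a_2z^2+\cdots+a_nz^n$ be a polynomial of degree $n\ge 2$ with positive coefficients, so that $P(0)=0$, and suppose $P'(0)>1$. Then the Julia set $\mathcal{J}(P)$ is symmetric with respect to the real line, contains the point $0$, and does not intersect the positive real line $(0,\infty)$.
   Context: For a polynomial $P$ of degree at least two, the filled Julia set is $K(P)=\{z\in\mathbb{C}: (P^n(z))_{n>0}\text{ is bounded}\}$ and the Julia set $\mathcal{J}(P)$ is the boundary of $K(P)$. *)

theory Defs
  imports "HOL-Analysis.Analysis" "HOL-Computational_Algebra.Polynomial"
begin

text \<open>Filled Julia set: points with bounded forward orbit under P (n > 0;
  including n = 0 does not change boundedness).\<close>
definition filled_julia :: "complex poly \<Rightarrow> complex set" where
  "filled_julia P = {z. bounded ((\<lambda>n. (poly P ^^ n) z) ` {n. n > 0})}"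

definition julia :: "complex poly \<Rightarrow> complex set" where
  "julia P = frontier (filled_julia P)"

end

theory Submission
  imports Defs "HOL-Computational_Algebra.Fundamental_Theorem_Algebra"
begin

text \<open>Beyond an escape radius \<open>r\<close> a polynomial of degree at least two at least doubles
  the modulus, so the filled Julia set is \<open>{z. \<forall>n. \<bar>P\<^sup>n(z)\<bar> \<le> r}\<close>, a closed set
  containing the Julia set. Real coefficients make \<open>P\<close> commute with complex conjugation,
  so the filled Julia set and its frontier are symmetric. On the positive reals a polynomial
  with nonnegative coefficients satisfies \<open>P(x) \<ge> a\<^sub>1 x\<close>, and \<open>a\<^sub>1 = P'(0) > 1\<close> makes these
  orbits escape: no positive real lies in the filled Julia set, hence none in the Julia set.
  Since \<open>0\<close> is a fixed point it lies in the filled Julia set, and it is a limit of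
  positive reals, so it lies on the frontier.\<close>

lemma poly_escape_radius:
  fixes P :: "'a::real_normed_field poly"
  assumes "degree P \<ge> 2"
  shows "\<exists>r\<ge>0. \<forall>z. r \<le> norm z \<longrightarrow> 2 * norm z \<le> norm (poly P z)"
proof -
  obtain a b Q where P: "P = pCons a (pCons b Q)"
    by (metis pCons_cases)
  have "Q \<noteq> 0"
    using assms by (auto simp: P split: if_splits)
  then obtain r0 where r0: "\<And>z. r0 \<le> norm z \<Longrightarrow> 3 \<le> norm (poly (pCons b Q) z)"
    using poly_infinity[of Q 3 b] by blast
  define r where "r = max (max r0 (norm a)) 0"
  have "2 * norm z \<le> norm (poly P z)" if z: "r \<le> norm z" for z
  proof -
    have "norm z * 3 \<le> norm (z * poly (pCons b Q) z)"
      using r0[of z] z by (simp add: r_def norm_mult mult_left_mono)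
    also have "\<dots> \<le> norm (poly P z) + norm a"
      using norm_triangle_ineq4[of "poly P z" a] by (simp add: P)
    finally show ?thesis
      using z by (simp add: r_def)
  qed
  then show ?thesis
    by (intro exI[of _ r]) (auto simp: r_def)
qed

lemma escaping_orbit_grows:
  fixes f :: "'a::real_normed_vector \<Rightarrow> 'a"
  assumes escape: "\<And>z. r \<le> norm z \<Longrightarrow> 2 * norm z \<le> norm (f z)"
    and "r \<le> norm w"
  shows "2 ^ n * norm w \<le> norm ((f ^^ n) w)"
proof (induction n)
  case 0
  then show ?case by simp
next
  case (Suc n)
  have "norm w \<le> 2 ^ n * norm w"
    by (simp add: mult_le_cancel_right1)
  then have "r \<le> norm ((f ^^ n) w)"
    using Suc \<open>r \<le> norm w\<close> by linarith
  then show ?case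
    using Suc escape[of "(f ^^ n) w"] by simp
qed

lemma bounded_orbit_iff_within_escape_radius:
  fixes f :: "'a::real_normed_vector \<Rightarrow> 'a"
  assumes "r \<ge> 0" and escape: "\<And>z. r \<le> norm z \<Longrightarrow> 2 * norm z \<le> norm (f z)"
  shows "bounded ((\<lambda>n. (f ^^ n) z) ` {n. n > 0}) \<longleftrightarrow> (\<forall>n. norm ((f ^^ n) z) \<le> r)"
proof
  assume "bounded ((\<lambda>n. (f ^^ n) z) ` {n. n > 0})"
  then obtain B where B: "\<And>n. n > 0 \<Longrightarrow> norm ((f ^^ n) z) \<le> B"
    unfolding bounded_iff by auto
  show "\<forall>n. norm ((f ^^ n) z) \<le> r"
  proof (rule ccontr)
    assume "\<not> (\<forall>n. norm ((f ^^ n) z) \<le> r)"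
    then obtain m where m: "r < norm ((f ^^ m) z)"
      by (auto simp: not_le)
    define w where "w = (f ^^ m) z"
    have w: "norm w > 0" "r \<le> norm w"
      using m \<open>r \<ge> 0\<close> unfolding w_def by linarith+
    obtain k where k: "B / norm w < 2 ^ k"
      using real_arch_pow[of 2 "B / norm w"] by auto
    have "B < 2 ^ k * norm w"
      using k w by (simp add: divide_less_eq)
    also have "\<dots> \<le> 2 ^ Suc k * norm w"
      by simp
    also have "\<dots> \<le> norm ((f ^^ Suc k) w)"
      using escaping_orbit_grows[OF escape w(2)] .
    also have "\<dots> \<le> B"
      using B[of "Suc k + m"] by (simp add: w_def funpow_add)
    finally show False by simp
  qed
next
  assume "\<forall>n. norm ((f ^^ n) z) \<le> r"
  then show "bounded ((\<lambda>n. (f ^^ n) z) ` {n. n > 0})"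
    unfolding bounded_iff by auto
qed

lemma filled_julia_escape_radius:
  fixes P :: "complex poly"
  assumes "degree P \<ge> 2"
  obtains r where "filled_julia P = {z. \<forall>n. norm ((poly P ^^ n) z) \<le> r}"
proof -
  obtain r where "r \<ge> 0" and "\<forall>z. r \<le> norm z \<longrightarrow> 2 * norm z \<le> norm (poly P z)"
    using poly_escape_radius[OF assms] by blast
  with bounded_orbit_iff_within_escape_radius[of r "poly P"] show ?thesis
    by (intro that[of r]) (auto simp: filled_julia_def)
qed

lemma continuous_on_funpow:
  fixes f :: "'a::topological_space \<Rightarrow> 'a"
  assumes "continuous_on UNIV f"
  shows "continuous_on UNIV (f ^^ n)"
proof (induction n)
  case 0
  then show ?case by (simp add: continuous_on_id)
next
  case (Suc n)
  then show ?case
    using continuous_on_compose[of UNIV "f ^^ n" f] assms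
    by (simp add: continuous_on_subset)
qed

lemma closed_filled_julia:
  fixes P :: "complex poly"
  assumes "degree P \<ge> 2"
  shows "closed (filled_julia P)"
proof -
  obtain r where K: "filled_julia P = {z. \<forall>n. norm ((poly P ^^ n) z) \<le> r}"
    using filled_julia_escape_radius[OF assms] by blast
  show ?thesis
    unfolding K Collect_all_eq
    by (intro closed_INT ballI closed_Collect_le continuous_on_norm continuous_on_const
        continuous_on_funpow continuous_on_poly continuous_on_id)
qed

lemma julia_subset_filled_julia:
  fixes P :: "complex poly"
  assumes "degree P \<ge> 2"
  shows "julia P \<subseteq> filled_julia P"
  unfolding julia_def using frontier_subset_closed[OF closed_filled_julia[OF assms]] .

lemma fixed_point_in_filled_julia:
  assumes "poly P z = z"
  shows "z \<in> filled_julia P"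
proof -
  have "(poly P ^^ n) z = z" for n
    by (induction n) (simp_all add: assms)
  then show ?thesis
    by (auto simp: filled_julia_def bounded_iff)
qed

lemma filled_julia_cnj_iff:
  fixes P :: "complex poly"
  assumes "\<And>k. coeff P k \<in> \<real>"
  shows "cnj z \<in> filled_julia P \<longleftrightarrow> z \<in> filled_julia P"
proof -
  have "(poly P ^^ n) (cnj z) = cnj ((poly P ^^ n) z)" for n
    by (induction n) (simp_all add: poly_cnj_real[OF assms])
  then show ?thesis
    by (simp add: filled_julia_def bounded_iff)
qed

lemma frontier_injective_linear_image:
  fixes f :: "'a::euclidean_space \<Rightarrow> 'a"
  assumes "linear f" "inj f"
  shows "frontier (f ` S) = f ` frontier S"
  by (simp add: frontier_def assms closure_injective_linear_image[symmetric]
      interior_injective_linear_image image_set_diff)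

lemma julia_cnj_iff:
  fixes P :: "complex poly"
  assumes "\<And>k. coeff P k \<in> \<real>"
  shows "cnj z \<in> julia P \<longleftrightarrow> z \<in> julia P"
proof -
  have "cnj ` filled_julia P = filled_julia P"
    using filled_julia_cnj_iff[OF assms] by (auto intro: image_eqI[of _ cnj "cnj _"])
  then have "cnj ` julia P = julia P"
    unfolding julia_def
    by (metis frontier_injective_linear_image linear_cnj complex_cnj_cancel_iff injI)
  then show ?thesis
    by (metis complex_cnj_cnj image_iff)
qed

lemma poly_map_poly_of_real:
  "poly (map_poly of_real p) (of_real x) = (of_real (poly p x) :: 'a::{comm_ring_1,real_algebra_1})"
  by (induction p) (auto simp: map_poly_pCons)

lemma linear_term_le_poly:
  fixes p :: "real poly"
  assumes "\<And>k. coeff p k \<ge> 0" and "x \<ge> 0"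
  shows "coeff p 1 * x \<le> poly p x"
proof (cases "degree p \<ge> 1")
  case True
  then show ?thesis
    unfolding poly_altdef
    using member_le_sum[of 1 "{..degree p}" "\<lambda>i. coeff p i * x ^ i"] assms by auto
next
  case False
  then have "coeff p 1 = 0"
    by (simp add: coeff_eq_0)
  then show ?thesis
    unfolding poly_altdef using assms by (simp add: sum_nonneg)
qed

lemma power_mult_le_funpow:
  fixes f :: "real \<Rightarrow> real"
  assumes "\<And>y. y \<ge> 0 \<Longrightarrow> a * y \<le> f y" and "a \<ge> 0" and "x \<ge> 0"
  shows "a ^ n * x \<le> (f ^^ n) x"
proof (induction n)
  case 0
  then show ?case by simp
next
  case (Suc n)
  have "0 \<le> (f ^^ n) x"
    using Suc \<open>a \<ge> 0\<close> \<open>x \<ge> 0\<close> by (meson order_trans zero_le_mult_iff zero_le_power)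
  then have "a * (f ^^ n) x \<le> (f ^^ Suc n) x"
    using assms(1) by simp
  moreover have "a * (a ^ n * x) \<le> a * (f ^^ n) x"
    using Suc \<open>a \<ge> 0\<close> by (simp add: mult_left_mono)
  ultimately show ?case
    by simp
qed

lemma of_real_notin_filled_julia:
  fixes p :: "real poly"
  assumes "degree p \<ge> 2" and "\<And>k. coeff p k \<ge> 0" and "coeff p 1 > 1" and "x > 0"
  shows "complex_of_real x \<notin> filled_julia (map_poly of_real p)"
proof
  define P where "P = map_poly complex_of_real p"
  have "degree P \<ge> 2"
    using assms(1) by (simp add: P_def degree_map_poly)
  then obtain r where K: "filled_julia P = {z. \<forall>n. norm ((poly P ^^ n) z) \<le> r}"
    using filled_julia_escape_radius by blast
  assume "complex_of_real x \<in> filled_julia (map_poly of_real p)"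
  then have bounded: "norm ((poly P ^^ n) (of_real x)) \<le> r" for n
    using K by (simp add: P_def)
  have orbit: "(poly P ^^ n) (of_real x) = of_real ((poly p ^^ n) x)" for n
    by (induction n) (simp_all add: P_def poly_map_poly_of_real)
  obtain n where n: "r / x < coeff p 1 ^ n"
    using real_arch_pow[OF assms(3)] by blast
  have "r < coeff p 1 ^ n * x"
    using n assms(4) by (simp add: divide_less_eq)
  also have "\<dots> \<le> (poly p ^^ n) x"
    using power_mult_le_funpow[of "coeff p 1" "poly p"] linear_term_le_poly[OF assms(2)] assms
    by simp
  also have "\<dots> \<le> r"
    using bounded[of n] by (simp add: orbit)
  finally show False by simp
qed

lemma zero_in_julia:
  fixes p :: "real poly"
  assumes "degree p \<ge> 2" and "\<And>k. coeff p k \<ge> 0" and "coeff p 0 = 0" and "coeff p 1 > 1"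
  shows "0 \<in> julia (map_poly of_real p)"
proof -
  let ?K = "filled_julia (map_poly complex_of_real p)"
  have "0 \<in> ?K"
    by (rule fixed_point_in_filled_julia) (simp add: poly_0_coeff_0 coeff_map_poly assms(3))
  moreover have "0 \<notin> interior ?K"
  proof
    assume "0 \<in> interior ?K"
    then obtain e where "e > 0" "ball 0 e \<subseteq> ?K"
      using mem_interior by blast
    then have "complex_of_real (e / 2) \<in> ?K"
      by (auto simp: subset_iff)
    with of_real_notin_filled_julia[OF assms(1,2,4), of "e / 2"] \<open>e > 0\<close> show False
      by simp
  qed
  ultimately show ?thesis
    unfolding julia_def frontier_def using closure_subset by blast
qed

lemma real_poly_eq_map_poly_of_real:
  fixes P :: "complex poly"
  assumes "\<And>k. coeff P k \<in> \<real>"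
  shows "P = map_poly of_real (map_poly Re P)"
  by (intro poly_eqI) (simp add: coeff_map_poly assms)

theorem lemma3p1:
  fixes P :: "complex poly"
  assumes "degree P \<ge> 2"
    and "coeff P 0 = 0"
    and "\<And>k. 1 \<le> k \<Longrightarrow> k \<le> degree P \<Longrightarrow> coeff P k \<in> \<real> \<and> Re (coeff P k) > 0"
    and "Re (poly (pderiv P) 0) > 1"
  shows "(\<forall>z. z \<in> julia P \<longleftrightarrow> cnj z \<in> julia P)
         \<and> 0 \<in> julia P
         \<and> julia P \<inter> {complex_of_real x | x. x > 0} = {}"
proof -
  have real: "coeff P k \<in> \<real> \<and> Re (coeff P k) \<ge> 0" for k
    using assms(2) assms(3)[of k] coeff_eq_0[of P k] by (cases "k = 0"; cases "k \<le> degree P") auto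
  define p where "p = map_poly Re P"
  have P: "P = map_poly of_real p"
    unfolding p_def using real by (intro real_poly_eq_map_poly_of_real) blast
  have deg: "degree p \<ge> 2"
    using assms(1) by (simp add: P degree_map_poly)
  have nonneg: "coeff p k \<ge> 0" for k
    using real by (simp add: p_def coeff_map_poly)
  have "coeff p 0 = 0" "coeff p 1 > 1"
    using assms(2,4) by (simp_all add: p_def coeff_map_poly poly_0_coeff_0 coeff_pderiv)
  then have "0 \<in> julia P"
    unfolding P using zero_in_julia deg nonneg by blast
  moreover have "z \<in> julia P \<longleftrightarrow> cnj z \<in> julia P" for z
    using julia_cnj_iff real by blast
  moreover have "complex_of_real x \<notin> julia P" if "x > 0" for x
    using julia_subset_filled_julia[OF assms(1)] of_real_notin_filled_julia[OF deg nonneg]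
      \<open>coeff p 1 > 1\<close> that unfolding P by blast
  ultimately show ?thesis
    by blast
qed

end
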